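(* Let $p_t,p_g\in[0,1]$ with $p_tp_g<1$. For every instance $\mathcal{I}$ and binary prediction $\hat{\mathbf{O}}$, the algorithm \textsc{SmoothMerge} with parameters $p_t,p_g$ satisfies \[ \mathbb{E}[|\textsc{Alg}(\mathcal{I})|] \ge \max\Big\{ |\textsc{Opt}(\mathcal{I})|\cdot(1-\eta)\cdot p_t(1-p_g),\ \frac{p_g-p_tp_g}{1-p_tp_g}\cdot|\textsc{Greedy}(\mathcal{I})| \Big\}, \] where $\eta=\eta(\mathcal{I},\hat{\mathbf{O}})$ is the prediction error.
   Context: Online interval scheduling: intervals $I_j$ with release time $r_j$, deadline $d_j$, length $l_j=d_j-r_j$ arrive online in non-decreasing order of release time; each must be irrevocably accepted or rejected upon arrival; accepted intervals must be pairwise non-overlapping; objective: maximize total accepted length $|\cdot|$. $\textsc{Opt}(\mathcal{I})$ is an optimal offline solution. A binary prediction $\hat{\mathbf{O}}=(\hat o_1,\dots,\hat o_n)\in\{0,1\}^n$ is revealed online with the intervals. $\textsc{Trust}$ is the algorithm accepting $I_j$ iff $\hat o_j=1$; $\textsc{Greedy}$ accepts each arriving interval iff it does not overlap any interval previously accepted by $\textsc{Greedy}$. Prediction error: $\eta(\mathcal{I},\hat{\mathbf{O}})=\frac{|\textsc{Opt}(\mathcal{I})|-|\textsc{Trust}(\mathcal{I},\hat{\mathbf{O}})|}{|\textsc{Opt}(\mathcal{I})|}$. \textsc{SmoothMerge}$(p_t,p_g)$: it simulates \textsc{Trust} and \textsc{Greedy} on the input and maintains a set $S$ (initially empty); on arrival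 of $I$: if $I$ overlaps an interval in $S$, reject; else if both \textsc{Trust} and \textsc{Greedy} accept $I$, add $I$ to $S$; else if only \textsc{Trust} accepts $I$, add $I$ to $S$ with probability $p_t$; else if only \textsc{Greedy} accepts $I$, add $I$ to $S$ with probability $p_g$; else reject (all coin flips independent). The output is $S$, and $\textsc{Alg}(\mathcal{I})=S$. *)

theory Defs
  imports "HOL-Probability.Probability"
begin

text \<open>An interval is a pair (release time r, deadline d); its length is d - r.
  Intervals are treated as half-open [r,d): two intervals overlap iff they share
  a point of positive measure.\<close>

type_synonym interval = "real \<times> real"

definition len :: "interval \<Rightarrow> real" where
  "len I = snd I - fst I"

definition overlaps :: "interval \<Rightarrow> interval \<Rightarrow> bool" where
  "overlaps I J \<longleftrightarrow> fst I < snd J \<and> fst J < snd I"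

definition feasible :: "interval list \<Rightarrow> nat set \<Rightarrow> bool" where
  "feasible xs F \<longleftrightarrow> F \<subseteq> {..<length xs} \<and>
     (\<forall>i\<in>F. \<forall>j\<in>F. i \<noteq> j \<longrightarrow> \<not> overlaps (xs ! i) (xs ! j))"

definition total_len :: "interval list \<Rightarrow> nat set \<Rightarrow> real" where
  "total_len xs F = (\<Sum>i\<in>F. len (xs ! i))"

definition opt_val :: "interval list \<Rightarrow> real" where
  "opt_val xs = Max (total_len xs ` {F. feasible xs F})"

definition trust_set :: "bool list \<Rightarrow> nat set" where
  "trust_set ps = {i. i < length ps \<and> ps ! i}"

definition trust_val :: "interval list \<Rightarrow> bool list \<Rightarrow> real" where
  "trust_val xs ps = total_len xs (trust_set ps)"

definition eta :: "interval list \<Rightarrow> bool list \<Rightarrow> real" where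
  "eta xs ps = (opt_val xs - trust_val xs ps) / opt_val xs"

fun greedy_aux :: "interval list \<Rightarrow> interval list \<Rightarrow> bool list" where
  "greedy_aux A [] = []"
| "greedy_aux A (I # Is) =
     (if (\<forall>J\<in>set A. \<not> overlaps I J) then True # greedy_aux (I # A) Is
      else False # greedy_aux A Is)"

definition greedy_dec :: "interval list \<Rightarrow> bool list" where
  "greedy_dec xs = greedy_aux [] xs"

definition greedy_val :: "interval list \<Rightarrow> real" where
  "greedy_val xs = total_len xs {i. i < length xs \<and> greedy_dec xs ! i}"

fun sm_aux :: "real \<Rightarrow> real \<Rightarrow> interval list \<Rightarrow> (interval \<times> bool \<times> bool) list
                 \<Rightarrow> interval list pmf" where
  "sm_aux pt pg S [] = return_pmf S"
| "sm_aux pt pg S ((I, t, g) # rest) =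
     (if (\<exists>J\<in>set S. overlaps I J) then sm_aux pt pg S rest
      else bind_pmf
        (if t \<and> g then return_pmf True
         else if t then bernoulli_pmf pt
         else if g then bernoulli_pmf pg
         else return_pmf False)
        (\<lambda>b. sm_aux pt pg (if b then S @ [I] else S) rest))"

definition smooth_merge :: "real \<Rightarrow> real \<Rightarrow> interval list \<Rightarrow> bool list \<Rightarrow> interval list pmf" where
  "smooth_merge pt pg xs ps = sm_aux pt pg [] (zip xs (zip ps (greedy_dec xs)))"

definition expected_alg :: "real \<Rightarrow> real \<Rightarrow> interval list \<Rightarrow> bool list \<Rightarrow> real" where
  "expected_alg pt pg xs ps =
     measure_pmf.expectation (smooth_merge pt pg xs ps) (\<lambda>S. sum_list (map len S))"

end

theory Submission
  imports Defs
begin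

text \<open>The expected value of SmoothMerge is the sum of the lengths weighted by the probabilities
  \<open>acc i\<close> that \<open>I\<^sub>i\<close> is accepted, and \<open>acc i\<close> is the probability of its coin times the
  probability that no earlier accepted interval overlaps \<open>I\<^sub>i\<close>. As release times are sorted, the
  earlier intervals overlapping \<open>I\<^sub>i\<close> all contain its release time and so pairwise overlap;
  hence at most one Trust interval and at most one Greedy interval can block \<open>I\<^sub>i\<close>.
  A Trust interval can only be blocked by one Greedy-only interval, accepted with probability at
  most \<open>pg\<close>, so \<open>acc i \<ge> pt (1 - pg)\<close>. A Greedy interval can only be blocked by one Trust-only
  interval, and by induction along the arrival order Trust-only intervals are accepted with
  probability at most \<open>\<beta> = pt (1 - pg) / (1 - pt pg)\<close>, so Greedy intervals are accepted with
  probability at least \<open>pg (1 - \<beta>) = (pg - pt pg) / (1 - pt pg)\<close>.\<close>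

lemma measure_bind_pmf_bool:
  fixes B :: "bool pmf"
  shows "measure_pmf.prob (bind_pmf B F) A =
    pmf B True * measure_pmf.prob (F True) A + pmf B False * measure_pmf.prob (F False) A"
proof -
  have "emeasure (measure_pmf (bind_pmf B F)) A = (\<Sum>b\<in>UNIV. emeasure (F b) A * pmf B b)"
    by (simp, rule nn_integral_measure_pmf_support) auto
  also have "\<dots> = ennreal (pmf B True * measure_pmf.prob (F True) A
                         + pmf B False * measure_pmf.prob (F False) A)"
    by (simp add: UNIV_bool measure_pmf.emeasure_eq_measure ennreal_mult ennreal_plus mult.commute)
  finally have "ennreal (measure_pmf.prob (bind_pmf B F) A) =
      ennreal (pmf B True * measure_pmf.prob (F True) A + pmf B False * measure_pmf.prob (F False) A)"
    by (simp add: measure_pmf.emeasure_eq_measure)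
  then show ?thesis
    by (subst (asm) ennreal_inj) auto
qed

lemma overlaps_commute: "overlaps I J \<longleftrightarrow> overlaps J I"
  unfolding overlaps_def by auto

definition accept_prob :: "real \<Rightarrow> real \<Rightarrow> bool \<Rightarrow> bool \<Rightarrow> real" where
  "accept_prob pt pg t g = (if t \<and> g then 1 else if t then pt else if g then pg else 0)"

definition step_coin :: "real \<Rightarrow> real \<Rightarrow> interval list \<Rightarrow> interval \<Rightarrow> bool \<Rightarrow> bool \<Rightarrow> bool pmf" where
  "step_coin pt pg S I t g =
     (if \<exists>J\<in>set S. overlaps I J then return_pmf False
      else if t \<and> g then return_pmf True
      else if t then bernoulli_pmf pt
      else if g then bernoulli_pmf pg
      else return_pmf False)"

lemma pmf_step_coin_True:
  assumes "0 \<le> pt" "pt \<le> 1" "0 \<le> pg" "pg \<le> 1"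
  shows "pmf (step_coin pt pg S I t g) True =
    (if \<exists>J\<in>set S. overlaps I J then 0 else accept_prob pt pg t g)"
  using assms by (simp add: step_coin_def accept_prob_def)

lemma step_coin_True_imp:
  "True \<in> set_pmf (step_coin pt pg S I t g) \<Longrightarrow> (\<forall>J\<in>set S. \<not> overlaps I J) \<and> (t \<or> g)"
  by (auto simp: step_coin_def split: if_splits)

fun sm_decisions :: "real \<Rightarrow> real \<Rightarrow> interval list \<Rightarrow> (interval \<times> bool \<times> bool) list
                       \<Rightarrow> bool list pmf" where
  "sm_decisions pt pg S [] = return_pmf []"
| "sm_decisions pt pg S ((I, t, g) # rest) =
     bind_pmf (step_coin pt pg S I t g)
       (\<lambda>b. map_pmf (Cons b) (sm_decisions pt pg (if b then S @ [I] else S) rest))"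

fun accepted :: "('a \<times> 'b) list \<Rightarrow> bool list \<Rightarrow> 'a list" where
  "accepted (x # xs) (b # bs) = (if b then [fst x] else []) @ accepted xs bs"
| "accepted _ _ = []"

lemma sm_aux_eq_map_sm_decisions:
  "sm_aux pt pg S rest = map_pmf (\<lambda>D. S @ accepted rest D) (sm_decisions pt pg S rest)"
proof (induction rest arbitrary: S)
  case Nil
  then show ?case by simp
next
  case (Cons x rest)
  obtain I t g where x: "x = (I, t, g)" by (cases x)
  have "sm_aux pt pg S (x # rest) =
      bind_pmf (step_coin pt pg S I t g) (\<lambda>b. sm_aux pt pg (if b then S @ [I] else S) rest)"
    by (simp add: x step_coin_def bind_return_pmf)
  also have "\<dots> = bind_pmf (step_coin pt pg S I t g) (\<lambda>b. map_pmf (\<lambda>D. S @ accepted (x # rest) D)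
      (map_pmf (Cons b) (sm_decisions pt pg (if b then S @ [I] else S) rest)))"
    by (intro bind_pmf_cong refl) (simp add: Cons.IH map_pmf_comp x)
  also have "\<dots> = map_pmf (\<lambda>D. S @ accepted (x # rest) D) (sm_decisions pt pg S (x # rest))"
    by (simp add: x map_bind_pmf)
  finally show ?case .
qed

definition sm_blocked :: "interval list \<Rightarrow> (interval \<times> 'b) list \<Rightarrow> bool list \<Rightarrow> nat \<Rightarrow> bool" where
  "sm_blocked S rest D i \<longleftrightarrow> (\<exists>J\<in>set S. overlaps (fst (rest ! i)) J) \<or>
      (\<exists>j<i. D ! j \<and> overlaps (fst (rest ! j)) (fst (rest ! i)))"

lemma sm_blocked_Cons_0: "sm_blocked S (x # rest) D 0 \<longleftrightarrow> (\<exists>J\<in>set S. overlaps (fst x) J)"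
  by (simp add: sm_blocked_def)

lemma sm_blocked_Cons_Suc:
  "sm_blocked S (x # rest) (b # D) (Suc i) = sm_blocked (if b then S @ [fst x] else S) rest D i"
  unfolding sm_blocked_def Ex_less_Suc2 by (auto simp: overlaps_commute)

lemma prob_sm_decisions_accept:
  assumes "0 \<le> pt" "pt \<le> 1" "0 \<le> pg" "pg \<le> 1" and "i < length rest"
  shows "measure_pmf.prob (sm_decisions pt pg S rest) {D. D ! i} =
    accept_prob pt pg (fst (snd (rest ! i))) (snd (snd (rest ! i))) *
    measure_pmf.prob (sm_decisions pt pg S rest) {D. \<not> sm_blocked S rest D i}"
  using assms(5)
proof (induction rest arbitrary: S i)
  case Nil
  then show ?case by simp
next
  case (Cons x rest)
  obtain I t g where x: "x = (I, t, g)" by (cases x)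
  let ?c = "step_coin pt pg S I t g"
  let ?M = "\<lambda>b. sm_decisions pt pg (if b then S @ [I] else S) rest"
  note bind_bool = measure_bind_pmf_bool[of ?c "\<lambda>b. map_pmf (Cons b) (?M b)"]
  show ?case
  proof (cases i)
    case 0
    have "{D. \<not> sm_blocked S (x # rest) D i} = (if \<exists>J\<in>set S. overlaps I J then {} else UNIV)"
      by (simp add: 0 x sm_blocked_Cons_0)
    then show ?thesis
      using bind_bool pmf_step_coin_True[OF assms(1-4)]
      by (simp add: 0 x vimage_def pmf_False_conv_True)
  next
    case (Suc i')
    let ?q = "accept_prob pt pg (fst (snd (rest ! i'))) (snd (snd (rest ! i')))"
    have i': "i' < length rest" using Cons.prems Suc by simp
    have "measure_pmf.prob (sm_decisions pt pg S (x # rest)) {D. D ! i} =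
        pmf ?c True * measure_pmf.prob (?M True) {D. D ! i'} +
        pmf ?c False * measure_pmf.prob (?M False) {D. D ! i'}"
      using bind_bool by (simp add: x Suc vimage_def)
    also have "\<dots> = ?q *
        (pmf ?c True * measure_pmf.prob (?M True) {D. \<not> sm_blocked (S @ [I]) rest D i'} +
         pmf ?c False * measure_pmf.prob (?M False) {D. \<not> sm_blocked S rest D i'})"
      using Cons.IH[OF i', of "S @ [I]"] Cons.IH[OF i', of S] by (simp add: algebra_simps)
    also have "\<dots> = ?q * measure_pmf.prob (sm_decisions pt pg S (x # rest))
                          {D. \<not> sm_blocked S (x # rest) D i}"
      using bind_bool sm_blocked_Cons_Suc[of S x rest True _ i']
        sm_blocked_Cons_Suc[of S x rest False _ i']
      by (simp add: x Suc vimage_def)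
    finally show ?thesis by (simp add: Suc)
  qed
qed

lemma length_sm_decisions:
  "D \<in> set_pmf (sm_decisions pt pg S rest) \<Longrightarrow> length D = length rest"
proof (induction rest arbitrary: S D)
  case (Cons x rest)
  then show ?case by (cases x) auto
qed simp

lemma sm_decisions_accept_imp:
  "D \<in> set_pmf (sm_decisions pt pg S rest) \<Longrightarrow> i < length rest \<Longrightarrow> D ! i \<Longrightarrow>
     \<not> sm_blocked S rest D i \<and> (fst (snd (rest ! i)) \<or> snd (snd (rest ! i)))"
proof (induction rest arbitrary: S D i)
  case Nil
  then show ?case by simp
next
  case (Cons x rest)
  obtain I t g where x: "x = (I, t, g)" by (cases x)
  from Cons.prems(1) obtain b D' where D: "D = b # D'"
    and b: "b \<in> set_pmf (step_coin pt pg S I t g)"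
    and D': "D' \<in> set_pmf (sm_decisions pt pg (if b then S @ [I] else S) rest)"
    by (auto simp: x)
  show ?case
  proof (cases i)
    case 0
    then show ?thesis
      using Cons.prems(3) b step_coin_True_imp by (auto simp: D x sm_blocked_Cons_0)
  next
    case (Suc i')
    then show ?thesis
      using Cons.IH[OF D', of i'] Cons.prems(2,3) sm_blocked_Cons_Suc[of S x rest b D' i']
      by (auto simp: D x)
  qed
qed

lemma finite_set_pmf_sm_decisions: "finite (set_pmf (sm_decisions pt pg S rest))"
proof (induction rest arbitrary: S)
  case (Cons x rest)
  have "finite (set_pmf (c :: bool pmf))" for c
    by (rule finite_subset[of _ UNIV]) auto
  with Cons.IH show ?case by (cases x) auto
qed simp

lemma sum_list_map_accepted:
  "length D = length rest \<Longrightarrow>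
   sum_list (map f (accepted rest D)) = (\<Sum>i<length rest. if D ! i then f (fst (rest ! i)) else 0)"
proof (induction rest arbitrary: D)
  case Nil
  then show ?case by simp
next
  case (Cons x rest)
  then obtain b D' where "D = b # D'" by (cases D) auto
  with Cons show ?case by (simp add: sum.lessThan_Suc_shift del: sum.lessThan_Suc cong: if_cong)
qed

lemma expectation_sum_accepted:
  fixes M :: "bool list pmf"
  assumes "finite (set_pmf M)" and "\<And>D. D \<in> set_pmf M \<Longrightarrow> length D = length rest"
  shows "measure_pmf.expectation M (\<lambda>D. sum_list (map f (accepted rest D))) =
    (\<Sum>i<length rest. f (fst (rest ! i)) * measure_pmf.prob M {D. D ! i})"
proof -
  have "measure_pmf.expectation M (\<lambda>D. sum_list (map f (accepted rest D))) =
      measure_pmf.expectation M (\<lambda>D. \<Sum>i<length rest. f (fst (rest ! i)) * indicator {D. D ! i} D)"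
  proof (intro integral_cong_AE)
    show "AE D in M. sum_list (map f (accepted rest D)) =
        (\<Sum>i<length rest. f (fst (rest ! i)) * indicator {D. D ! i} D)"
      unfolding AE_measure_pmf_iff
    proof
      fix D assume "D \<in> set_pmf M"
      then show "sum_list (map f (accepted rest D)) =
          (\<Sum>i<length rest. f (fst (rest ! i)) * indicator {D. D ! i} D)"
        by (simp add: assms(2) sum_list_map_accepted indicator_def sum.If_cases)
    qed
  qed simp_all
  also have "\<dots> = (\<Sum>i<length rest. f (fst (rest ! i)) * measure_pmf.prob M {D. D ! i})"
    using assms(1) by (subst Bochner_Integration.integral_sum)
      (auto intro: integrable_measure_pmf_finite)
  finally show ?thesis .
qed

lemma length_greedy_aux: "length (greedy_aux A xs) = length xs"
  by (induction A xs rule: greedy_aux.induct) auto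

lemma nth_greedy_aux:
  "i < length xs \<Longrightarrow> greedy_aux A xs ! i \<longleftrightarrow>
    (\<forall>J\<in>set A. \<not> overlaps (xs ! i) J) \<and>
    (\<forall>j<i. greedy_aux A xs ! j \<longrightarrow> \<not> overlaps (xs ! i) (xs ! j))"
proof (induction xs arbitrary: A i)
  case Nil
  then show ?case by simp
next
  case (Cons I Is)
  show ?case
  proof (cases i)
    case 0
    then show ?thesis by simp
  next
    case (Suc i')
    then have "i' < length Is" using Cons.prems by simp
    then show ?thesis
      using Cons.IH[of i' "I # A"] Cons.IH[of i' A]
      by (auto simp: Suc All_less_Suc2 overlaps_commute)
  qed
qed

lemma length_greedy_dec: "length (greedy_dec xs) = length xs"
  by (simp add: greedy_dec_def length_greedy_aux)

lemma nth_greedy_dec: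
  "i < length xs \<Longrightarrow> greedy_dec xs ! i \<longleftrightarrow>
    (\<forall>j<i. greedy_dec xs ! j \<longrightarrow> \<not> overlaps (xs ! i) (xs ! j))"
  unfolding greedy_dec_def by (simp add: nth_greedy_aux)

lemma feasible_greedy_dec: "feasible xs {i. i < length xs \<and> greedy_dec xs ! i}"
proof -
  have "\<not> overlaps (xs ! i) (xs ! j)"
    if "i < length xs" "greedy_dec xs ! i" "greedy_dec xs ! j" "j < i" for i j
    using that nth_greedy_dec by blast
  then show ?thesis
    unfolding feasible_def by (metis (no_types, lifting) mem_Collect_eq lessThan_iff subsetI
      nat_neq_iff overlaps_commute)
qed

lemma overlaps_common_later:
  assumes "sorted (map fst xs)" and "\<forall>I\<in>set xs. fst I < snd I"
    and "j < k" "j' < k" "k < length xs"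
    and "overlaps (xs ! j) (xs ! k)" "overlaps (xs ! j') (xs ! k)"
  shows "j = j' \<or> overlaps (xs ! j) (xs ! j')"
proof -
  have later: "overlaps (xs ! a) (xs ! b)"
    if "a < b" "b < k" "overlaps (xs ! a) (xs ! k)" for a b
  proof -
    have "fst (xs ! a) \<le> fst (xs ! b)" "fst (xs ! b) \<le> fst (xs ! k)"
      using assms(1,5) that sorted_nth_mono[of "map fst xs"] by auto
    moreover have "fst (xs ! b) < snd (xs ! b)"
      using assms(2,5) that by auto
    ultimately show ?thesis
      using that(3) unfolding overlaps_def by auto
  qed
  show ?thesis
    using later[of j j'] later[of j' j] assms(3-7) nat_neq_iff overlaps_commute by metis
qed

lemma opt_val_mul_one_minus_eta_le:
  assumes "0 \<le> trust_val xs ps"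
  shows "opt_val xs * (1 - eta xs ps) \<le> trust_val xs ps"
  using assms by (cases "opt_val xs = 0") (simp_all add: eta_def field_simps)

locale smooth_merge_instance =
  fixes pt pg :: real and xs :: "interval list" and ps :: "bool list"
  assumes pt_nonneg: "0 \<le> pt" and pt_le_1: "pt \<le> 1"
    and pg_nonneg: "0 \<le> pg" and pg_le_1: "pg \<le> 1"
    and pt_pg_less_1: "pt * pg < 1"
    and length_pos: "\<forall>I\<in>set xs. fst I < snd I"
    and sorted_release: "sorted (map fst xs)"
    and length_ps: "length ps = length xs"
    and trust_feasible: "feasible xs (trust_set ps)"
begin

abbreviation gd :: "bool list" where
  "gd \<equiv> greedy_dec xs"

definition decisions :: "bool list pmf" where
  "decisions = sm_decisions pt pg [] (zip xs (zip ps gd))"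

definition acc :: "nat \<Rightarrow> real" where
  "acc i = measure_pmf.prob decisions {D. D ! i}"

definition blocked :: "bool list \<Rightarrow> nat \<Rightarrow> bool" where
  "blocked D i \<longleftrightarrow> (\<exists>j<i. D ! j \<and> overlaps (xs ! j) (xs ! i))"

lemma nth_zip_decisions:
  "i < length xs \<Longrightarrow> zip xs (zip ps gd) ! i = (xs ! i, ps ! i, gd ! i)"
  by (simp add: length_ps length_greedy_dec)

lemma sm_blocked_eq_blocked: "i < length xs \<Longrightarrow> sm_blocked [] (zip xs (zip ps gd)) D i = blocked D i"
  unfolding sm_blocked_def blocked_def by (auto simp: nth_zip_decisions)

lemma acc_eq:
  assumes "i < length xs"
  shows "acc i =
    accept_prob pt pg (ps ! i) (gd ! i) * (1 - measure_pmf.prob decisions {D. blocked D i})"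
proof -
  have "acc i = accept_prob pt pg (ps ! i) (gd ! i) * measure_pmf.prob decisions {D. \<not> blocked D i}"
    using prob_sm_decisions_accept[OF pt_nonneg pt_le_1 pg_nonneg pg_le_1, of i _ "[]"] assms
    by (simp add: acc_def decisions_def length_ps length_greedy_dec nth_zip_decisions
        sm_blocked_eq_blocked)
  also have "{D. \<not> blocked D i} = UNIV - {D. blocked D i}"
    by blast
  also have "measure_pmf.prob decisions \<dots> = 1 - measure_pmf.prob decisions {D. blocked D i}"
    using measure_pmf.prob_compl[of "{D. blocked D i}" decisions] by simp
  finally show ?thesis .
qed

lemma acc_nonneg: "0 \<le> acc i"
  by (simp add: acc_def)

lemma accept_imp:
  "D \<in> set_pmf decisions \<Longrightarrow> i < length xs \<Longrightarrow> D ! i \<Longrightarrow> \<not> blocked D i \<and> (ps ! i \<or> gd ! i)"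
  using sm_decisions_accept_imp[of D pt pg "[]" "zip xs (zip ps gd)" i]
  by (simp add: decisions_def length_ps length_greedy_dec nth_zip_decisions sm_blocked_eq_blocked)

lemma prob_blocked_le:
  assumes i: "i < length xs"
    and only_C: "\<And>D j. D \<in> set_pmf decisions \<Longrightarrow> j < i \<Longrightarrow> D ! j \<Longrightarrow>
                   overlaps (xs ! j) (xs ! i) \<Longrightarrow> C j"
    and C_disjoint: "\<And>j j'. C j \<Longrightarrow> C j' \<Longrightarrow> j \<noteq> j' \<Longrightarrow> \<not> overlaps (xs ! j) (xs ! j')"
    and acc_C: "\<And>j. j < i \<Longrightarrow> C j \<Longrightarrow> acc j \<le> b" and "0 \<le> b"
  shows "measure_pmf.prob decisions {D. blocked D i} \<le> b"
proof (cases "\<exists>j<i. C j \<and> overlaps (xs ! j) (xs ! i)")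
  case True
  then obtain j0 where j0: "j0 < i" "C j0" "overlaps (xs ! j0) (xs ! i)" by blast
  have "measure_pmf.prob decisions {D. blocked D i} \<le> acc j0"
    unfolding acc_def
  proof (rule measure_pmf.finite_measure_mono_AE)
    show "AE D in decisions. D \<in> {D. blocked D i} \<longrightarrow> D \<in> {D. D ! j0}"
      unfolding AE_measure_pmf_iff
    proof (intro ballI impI)
      fix D assume D: "D \<in> set_pmf decisions" "D \<in> {D. blocked D i}"
      then obtain j where j: "j < i" "D ! j" "overlaps (xs ! j) (xs ! i)"
        by (auto simp: blocked_def)
      have "j = j0"
        using overlaps_common_later[OF sorted_release length_pos j(1) j0(1) i j(3) j0(3)]
          C_disjoint[OF only_C[OF D(1) j] j0(2)] by blast
      with j show "D \<in> {D. D ! j0}" by simp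
    qed
  qed simp
  with acc_C j0 show ?thesis by fastforce
next
  case False
  have "measure_pmf.prob decisions {D. blocked D i} \<le> measure_pmf.prob decisions {}"
    by (rule measure_pmf.finite_measure_mono_AE)
      (use False only_C in \<open>auto simp: AE_measure_pmf_iff blocked_def\<close>)
  with \<open>0 \<le> b\<close> show ?thesis by simp
qed

lemma trust_overlap_disjoint:
  "ps ! j \<Longrightarrow> ps ! j' \<Longrightarrow> j < length xs \<Longrightarrow> j' < length xs \<Longrightarrow> j \<noteq> j' \<Longrightarrow>
    \<not> overlaps (xs ! j) (xs ! j')"
  using trust_feasible length_ps by (auto simp: feasible_def trust_set_def)

lemma greedy_overlap_disjoint:
  "gd ! j \<Longrightarrow> gd ! j' \<Longrightarrow> j < length xs \<Longrightarrow> j' < length xs \<Longrightarrow> j \<noteq> j' \<Longrightarrow>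
    \<not> overlaps (xs ! j) (xs ! j')"
  using feasible_greedy_dec[of xs] by (auto simp: feasible_def)

lemma acc_trust:
  assumes i: "i < length xs" and "ps ! i"
  shows "pt * (1 - pg) \<le> acc i"
proof -
  have "measure_pmf.prob decisions {D. blocked D i} \<le> pg"
  proof (rule prob_blocked_le[OF i, where C = "\<lambda>j. j < length xs \<and> gd ! j \<and> \<not> ps ! j"])
    fix D j assume D: "D \<in> set_pmf decisions" and "j < i" "D ! j" "overlaps (xs ! j) (xs ! i)"
    moreover from \<open>j < i\<close> i have "j < length xs" by simp
    ultimately show "j < length xs \<and> gd ! j \<and> \<not> ps ! j"
      using accept_imp[OF D \<open>j < length xs\<close>] trust_overlap_disjoint[of j i] assms by auto
  next
    fix j assume "j < i" "j < length xs \<and> gd ! j \<and> \<not> ps ! j"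
    then show "acc j \<le> pg"
      using acc_eq[of j] pg_nonneg by (simp add: accept_prob_def mult_left_le)
  qed (use greedy_overlap_disjoint pg_nonneg in auto)
  moreover have "pt \<le> accept_prob pt pg (ps ! i) (gd ! i)"
    using \<open>ps ! i\<close> pt_le_1 by (simp add: accept_prob_def)
  ultimately show ?thesis
    using acc_eq[OF i] pt_nonneg pg_le_1 by (auto intro: mult_mono)
qed

text \<open>\<open>\<beta>\<close> is the fixed point of \<open>b \<mapsto> pt (1 - pg (1 - b))\<close>: a bound \<open>b\<close> on the earlier
  Trust-only intervals yields the bound \<open>pt (1 - pg (1 - b))\<close> on the next one.\<close>
definition \<beta> :: real where
  "\<beta> = pt * (1 - pg) / (1 - pt * pg)"

lemma \<beta>_fixed_point: "pt * (1 - pg * (1 - \<beta>)) = \<beta>"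
  unfolding \<beta>_def using pt_pg_less_1 by (simp add: field_simps)

lemma pg_mul_one_minus_\<beta>: "pg * (1 - \<beta>) = (pg - pt * pg) / (1 - pt * pg)"
  unfolding \<beta>_def using pt_pg_less_1 by (simp add: field_simps)

lemma \<beta>_nonneg: "0 \<le> \<beta>"
  unfolding \<beta>_def using pt_nonneg pg_le_1 pt_pg_less_1 by simp

lemma \<beta>_le_1: "\<beta> \<le> 1"
  unfolding \<beta>_def using pt_le_1 pt_pg_less_1 by (simp add: algebra_simps)

lemma acc_greedy_if_trust_only_le:
  assumes j: "j < length xs" and "gd ! j"
    and trust_only: "\<And>m. m < j \<Longrightarrow> ps ! m \<Longrightarrow> \<not> gd ! m \<Longrightarrow> acc m \<le> \<beta>"
  shows "pg * (1 - \<beta>) \<le> acc j"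
proof -
  have "measure_pmf.prob decisions {D. blocked D j} \<le> \<beta>"
  proof (rule prob_blocked_le[OF j, where C = "\<lambda>m. m < length xs \<and> ps ! m \<and> \<not> gd ! m"])
    fix D m assume D: "D \<in> set_pmf decisions" and "m < j" "D ! m" "overlaps (xs ! m) (xs ! j)"
    moreover from \<open>m < j\<close> j have "m < length xs" by simp
    ultimately show "m < length xs \<and> ps ! m \<and> \<not> gd ! m"
      using accept_imp[OF D \<open>m < length xs\<close>] greedy_overlap_disjoint[of m j] assms by auto
  qed (use trust_overlap_disjoint trust_only \<beta>_nonneg in auto)
  moreover have "pg \<le> accept_prob pt pg (ps ! j) (gd ! j)"
    using \<open>gd ! j\<close> pg_le_1 by (simp add: accept_prob_def)
  ultimately show ?thesis
    using acc_eq[OF j] pg_nonneg \<beta>_le_1 by (auto intro: mult_mono)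
qed

lemma acc_trust_only_le:
  "m < length xs \<Longrightarrow> ps ! m \<Longrightarrow> \<not> gd ! m \<Longrightarrow> acc m \<le> \<beta>"
proof (induction m rule: less_induct)
  case (less m)
  obtain j where j: "j < m" "gd ! j" "overlaps (xs ! m) (xs ! j)"
    using nth_greedy_dec[OF less.prems(1)] less.prems(3) by blast
  have "pg * (1 - \<beta>) \<le> acc j"
    using acc_greedy_if_trust_only_le[of j] less j by auto
  also have "acc j \<le> measure_pmf.prob decisions {D. blocked D m}"
    unfolding acc_def
    by (rule measure_pmf.finite_measure_mono) (use j in \<open>auto simp: blocked_def overlaps_commute\<close>)
  finally have "acc m \<le> pt * (1 - pg * (1 - \<beta>))"
    using acc_eq[OF less.prems(1)] less.prems pt_nonneg
    by (simp add: accept_prob_def mult_left_mono)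
  then show ?case
    by (simp add: \<beta>_fixed_point)
qed

lemma acc_greedy: "j < length xs \<Longrightarrow> gd ! j \<Longrightarrow> (pg - pt * pg) / (1 - pt * pg) \<le> acc j"
  using acc_greedy_if_trust_only_le[of j] acc_trust_only_le pg_mul_one_minus_\<beta> by auto

lemma expected_alg_eq: "expected_alg pt pg xs ps = (\<Sum>i<length xs. len (xs ! i) * acc i)"
proof -
  have "expected_alg pt pg xs ps =
      measure_pmf.expectation decisions (\<lambda>D. sum_list (map len (accepted (zip xs (zip ps gd)) D)))"
    by (simp add: expected_alg_def smooth_merge_def sm_aux_eq_map_sm_decisions decisions_def)
  also have "\<dots> = (\<Sum>i<length xs. len (xs ! i) * acc i)"
    unfolding decisions_def acc_def
    by (subst expectation_sum_accepted)
      (auto simp: finite_set_pmf_sm_decisions length_sm_decisions length_ps length_greedy_dec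
        nth_zip_decisions)
  finally show ?thesis .
qed

lemma len_nonneg: "i < length xs \<Longrightarrow> 0 \<le> len (xs ! i)"
  using length_pos by (auto simp: len_def less_imp_le)

lemma total_len_nonneg: "A \<subseteq> {..<length xs} \<Longrightarrow> 0 \<le> total_len xs A"
  unfolding total_len_def using len_nonneg by (auto intro: sum_nonneg)

lemma scaled_total_len_le_expected_alg:
  assumes "A \<subseteq> {..<length xs}" and "\<And>i. i \<in> A \<Longrightarrow> c \<le> acc i"
  shows "c * total_len xs A \<le> expected_alg pt pg xs ps"
proof -
  have "c * total_len xs A = (\<Sum>i\<in>A. c * len (xs ! i))"
    by (simp add: total_len_def sum_distrib_left)
  also have "\<dots> \<le> (\<Sum>i\<in>A. len (xs ! i) * acc i)"
    using assms len_nonneg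
    by (intro sum_mono) (metis mult.commute mult_right_mono subsetD lessThan_iff)
  also have "\<dots> \<le> (\<Sum>i<length xs. len (xs ! i) * acc i)"
    using assms(1) len_nonneg acc_nonneg by (intro sum_mono2) auto
  finally show ?thesis
    by (simp add: expected_alg_eq)
qed

lemma trust_set_subset: "trust_set ps \<subseteq> {..<length xs}"
  using length_ps by (auto simp: trust_set_def)

lemma trust_val_le_expected_alg: "pt * (1 - pg) * trust_val xs ps \<le> expected_alg pt pg xs ps"
  unfolding trust_val_def
  by (rule scaled_total_len_le_expected_alg[OF trust_set_subset])
    (use acc_trust length_ps in \<open>auto simp: trust_set_def\<close>)

lemma greedy_val_le_expected_alg:
  "(pg - pt * pg) / (1 - pt * pg) * greedy_val xs \<le> expected_alg pt pg xs ps"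
  unfolding greedy_val_def by (rule scaled_total_len_le_expected_alg) (auto simp: acc_greedy)

end

theorem mainTheorem5:
  fixes pt pg :: real and xs :: "interval list" and ps :: "bool list"
  assumes "0 \<le> pt" "pt \<le> 1" "0 \<le> pg" "pg \<le> 1" "pt * pg < 1"
    and "\<forall>I\<in>set xs. fst I < snd I"
    and "sorted (map fst xs)"
    and "length ps = length xs"
    and "feasible xs (trust_set ps)"
  shows "expected_alg pt pg xs ps \<ge>
    max (opt_val xs * (1 - eta xs ps) * pt * (1 - pg))
        ((pg - pt * pg) / (1 - pt * pg) * greedy_val xs)"
proof -
  interpret smooth_merge_instance pt pg xs ps
    using assms by unfold_locales
  have "opt_val xs * (1 - eta xs ps) \<le> trust_val xs ps"
    by (rule opt_val_mul_one_minus_eta_le)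
      (simp add: trust_val_def total_len_nonneg trust_set_subset)
  then have "opt_val xs * (1 - eta xs ps) * (pt * (1 - pg)) \<le> trust_val xs ps * (pt * (1 - pg))"
    by (rule mult_right_mono) (use assms(1,4) in simp)
  then have "opt_val xs * (1 - eta xs ps) * pt * (1 - pg) \<le> expected_alg pt pg xs ps"
    using trust_val_le_expected_alg by (simp add: mult_ac)
  then show ?thesis
    using greedy_val_le_expected_alg by simp
qed

end
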